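(* Let $X$ be a topological space and let $G\subset \mathrm{Hom}(X)$ be a group of homeomorphisms of $X$ (acting effectively) such that the topology of pointwise convergence $\tau_p$ is an admissible group topology on $G$; $G$ carries $\tau_p$. Let $\mathcal U_X$ be an equiuniformity on $X$ for the action of $G$. Let $\mathcal U$ be the uniformity on $G$ whose base consists of the coverings $$\{U_{x_1,\dots,x_n;g;\mathrm U}\mid g\in G\},\qquad U_{x_1,\dots,x_n;g;\mathrm U}=\{h\in G\mid (g(x_k),h(x_k))\in \mathrm U,\ k=1,\dots,n\},$$ where $x_1,\dots,x_n\in X$, $n\in\mathbb N$, and $\mathrm U$ is an entourage of $\mathcal U_X$. Let $R_{\mathcal K}$ be the uniformity on $G$ whose base consists of the coverings $\{Og\,\mathrm{St}_{x_1,\dots,x_n}\mid g\in G\}$, where $O$ is a neighbourhood of the identity of $G$ and $x_1,\dots,x_n\in X$, $n\in\mathbb N$. For $x_1,\dots,x_n\in X$ and an entourage $\mathrm U\in\mathcal U_X$ put $O_{x_1,\dots,x_n;\mathrm U}=\{h\in G\mid (x_k,h(x_k))\in\mathrm U,\ (x_k,h^{-1}(x_k))\in\mathrm U,\ k=1,\dots,n\}$. Then: (1) $\mathcal U\subset R_{\mathcal K}$. (2) Suppose that for any points $x_1,\dots,x_n\in X$, $n\in\mathbb N$, and any entourage $\mathrm U\in\mathcal U_X$ there is an entourage $\mathrm V\in\mathcal U_X$ such that: whenever $g,h\in G$ satisfy $(g(x_k),h(x_k))\in\mathrm V$ for $k=1,\dots,n$, there exists $g'\in g\,\mathrm{St}_{x_1,\dots,x_n}$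 with $h\in O_{x_1,\dots,x_n;\mathrm U}\,g'$. Then $\mathcal U=R_{\mathcal K}$.
   Context: The topology of pointwise convergence $\tau_p$ on $G$ has subbase the sets $[x,O]=\{f\in G\mid f(x)\in O\}$, $x\in X$, $O$ open in $X$. A group topology on $G$ is admissible if $G$ is a topological group in it and the action $G\times X\to X$ is continuous. $\mathrm{St}_{x_1,\dots,x_n}=\{g\in G\mid g(x_i)=x_i,\ i=1,\dots,n\}$. A uniformity $\mathcal U_X$ on $X$ (compatible with its topology) is an equiuniformity if every $g\in G$ is uniformly continuous and for every uniform covering $u$ there are a neighbourhood $O$ of the identity of $G$ and a uniform covering $v$ such that $\{OV\mid V\in v\}$ refines $u$. The uniformity $\mathcal U$ is the restriction to $G$, embedded in $X^X$ via $g\mapsto (g(x))_{x\in X}$, of the product uniformity of copies of $\mathcal U_X$. *)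

theory Defs
  imports "HOL-Analysis.Analysis"
begin

text \<open>The space X is the whole type 'a; its topology and its (compatible)
uniformity U_X are those of the class uniform_space.\<close>

definition entourage :: "('a::uniform_space \<times> 'a) set \<Rightarrow> bool" where
  "entourage E \<longleftrightarrow> eventually (\<lambda>p. p \<in> E) uniformity"

definition uniform_cover :: "'a::uniform_space set set \<Rightarrow> bool" where
  "uniform_cover u \<longleftrightarrow> (\<exists>E. entourage E \<and> (\<forall>x. \<exists>C\<in>u. {y. (x, y) \<in> E} \<subseteq> C))"

definition ptop :: "('a::topological_space \<Rightarrow> 'a) set \<Rightarrow> ('a \<Rightarrow> 'a) topology" where
  "ptop G = subtopology (product_topology (\<lambda>_. euclidean) UNIV) G"

definition homeo_group :: "('a::topological_space \<Rightarrow> 'a) set \<Rightarrow> bool" where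
  "homeo_group G \<longleftrightarrow> id \<in> G \<and> (\<forall>g\<in>G. \<forall>h\<in>G. g \<circ> h \<in> G) \<and> (\<forall>g\<in>G. inv g \<in> G)
     \<and> (\<forall>g\<in>G. homeomorphism UNIV UNIV g (inv g))"

definition admissible :: "('a::topological_space \<Rightarrow> 'a) topology \<Rightarrow> ('a \<Rightarrow> 'a) set \<Rightarrow> bool" where
  "admissible T G \<longleftrightarrow> topspace T = G
     \<and> continuous_map (prod_topology T T) T (\<lambda>(f, g). f \<circ> g)
     \<and> continuous_map T T inv
     \<and> continuous_map (prod_topology T euclidean) euclidean (\<lambda>(g, x). g x)"

definition nbhd_id :: "('a::topological_space \<Rightarrow> 'a) set \<Rightarrow> ('a \<Rightarrow> 'a) set \<Rightarrow> bool" where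
  "nbhd_id G W \<longleftrightarrow> W \<subseteq> G \<and> (\<exists>V. openin (ptop G) V \<and> id \<in> V \<and> V \<subseteq> W)"

definition act_set :: "('a \<Rightarrow> 'a) set \<Rightarrow> 'a set \<Rightarrow> 'a set" where
  "act_set W V = {g x | g x. g \<in> W \<and> x \<in> V}"

definition equiuniformity :: "('a::uniform_space \<Rightarrow> 'a) set \<Rightarrow> bool" where
  "equiuniformity G \<longleftrightarrow> (\<forall>g\<in>G. uniformly_continuous_on UNIV g)
     \<and> (\<forall>u. uniform_cover u \<longrightarrow> (\<exists>W v. nbhd_id G W \<and> uniform_cover v
            \<and> (\<forall>V\<in>v. \<exists>C\<in>u. act_set W V \<subseteq> C)))"

definition St :: "('a \<Rightarrow> 'a) set \<Rightarrow> 'a set \<Rightarrow> ('a \<Rightarrow> 'a) set" where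
  "St G F = {g \<in> G. \<forall>x\<in>F. g x = x}"

definition Ucov :: "('a \<Rightarrow> 'a) set \<Rightarrow> 'a set \<Rightarrow> ('a \<Rightarrow> 'a) \<Rightarrow> ('a \<times> 'a) set \<Rightarrow> ('a \<Rightarrow> 'a) set" where
  "Ucov G F g E = {h \<in> G. \<forall>x\<in>F. (g x, h x) \<in> E}"

definition Onb :: "('a \<Rightarrow> 'a) set \<Rightarrow> 'a set \<Rightarrow> ('a \<times> 'a) set \<Rightarrow> ('a \<Rightarrow> 'a) set" where
  "Onb G F E = {h \<in> G. \<forall>x\<in>F. (x, h x) \<in> E \<and> (x, inv h x) \<in> E}"

definition base_U :: "('a::uniform_space \<Rightarrow> 'a) set \<Rightarrow> ('a \<Rightarrow> 'a) set set set" where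
  "base_U G = {{Ucov G F g E | g. g \<in> G} | F E. finite F \<and> entourage E}"

definition base_R :: "('a::uniform_space \<Rightarrow> 'a) set \<Rightarrow> ('a \<Rightarrow> 'a) set set set" where
  "base_R G = {{{a \<circ> g \<circ> s | a s. a \<in> W \<and> s \<in> St G F} | g. g \<in> G} | W F. nbhd_id G W \<and> finite F}"

definition refines :: "'b set set \<Rightarrow> 'b set set \<Rightarrow> bool" where
  "refines a b \<longleftrightarrow> (\<forall>A\<in>a. \<exists>B\<in>b. A \<subseteq> B)"

definition gen_unif :: "'b set \<Rightarrow> 'b set set set \<Rightarrow> 'b set set set" where
  "gen_unif S B = {c. \<Union>c = S \<and> (\<exists>b\<in>B. refines b c)}"

definition hyp2 :: "('a::uniform_space \<Rightarrow> 'a) set \<Rightarrow> bool" where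
  "hyp2 G \<longleftrightarrow> (\<forall>F E. finite F \<and> entourage E \<longrightarrow>
     (\<exists>D. entourage D \<and> (\<forall>g\<in>G. \<forall>h\<in>G. (\<forall>x\<in>F. (g x, h x) \<in> D) \<longrightarrow>
        (\<exists>g'\<in>{g \<circ> s | s. s \<in> St G F}. h \<in> {a \<circ> g' | a. a \<in> Onb G F E}))))"

end

theory Submission
  imports Defs
begin

text \<open>For (1), equiuniformity yields a neighbourhood O of the
identity all of whose elements move every point E-little; as St_F fixes F, each cell O g St_F
then lies in U_{F;g;E}. For (2), a pointwise neighbourhood O of the identity contains O_{F';E}
for some finite F' containing F, and the hypothesis places each cell U_{F';g;D} inside
O_{F';E} g St_{F'}, which is contained in O g St_F.\<close>

lemma refines_trans: "refines a b \<Longrightarrow> refines b c \<Longrightarrow> refines a c"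
  unfolding refines_def by (meson order_trans)

lemma gen_unif_mono_base:
  assumes "\<And>b. b \<in> B \<Longrightarrow> \<exists>b'\<in>B'. refines b' b"
  shows "gen_unif S B \<subseteq> gen_unif S B'"
  using assms refines_trans unfolding gen_unif_def by blast

lemma equiuniformity_small_nbhd_id:
  fixes G :: "('a::uniform_space \<Rightarrow> 'a) set"
  assumes eq: "equiuniformity G" and E: "entourage E"
  shows "\<exists>W. nbhd_id G W \<and> (\<forall>a\<in>W. \<forall>y. (y, a y) \<in> E)"
proof -
  obtain E1 where E1: "eventually E1 uniformity"
    and tr: "\<forall>x y z. E1 (x, y) \<longrightarrow> E1 (y, z) \<longrightarrow> (x, z) \<in> E"
    using uniformity_trans[of "\<lambda>p. p \<in> E"] E unfolding entourage_def by blast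
  define E' where "E' = {p. E1 p \<and> E1 (snd p, fst p)}"
  have "entourage E'"
    unfolding entourage_def E'_def
    using E1 uniformity_sym[OF E1] by (auto elim: eventually_elim2 simp: split_beta)
  define u where "u = {{z'. (z, z') \<in> E'} | z. True}"
  have "uniform_cover u" unfolding uniform_cover_def u_def using \<open>entourage E'\<close> by blast
  then obtain W v where W: "nbhd_id G W" and v: "uniform_cover v"
    and Wv: "\<forall>V\<in>v. \<exists>C\<in>u. act_set W V \<subseteq> C"
    using eq unfolding equiuniformity_def by blast
  obtain D where D: "entourage D" and Dv: "\<forall>x. \<exists>C\<in>v. {y. (x, y) \<in> D} \<subseteq> C"
    using v unfolding uniform_cover_def by blast
  have "(y, a y) \<in> E" if a: "a \<in> W" for a y
  proof -
    obtain V where V: "V \<in> v" "{y'. (y, y') \<in> D} \<subseteq> V" using Dv by blast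
    have "(y, y) \<in> D" using D uniformity_refl unfolding entourage_def by blast
    hence "y \<in> V" using V by blast
    obtain z where "act_set W V \<subseteq> {z'. (z, z') \<in> E'}" using Wv V u_def by blast
    moreover have "a y \<in> act_set W V" "id y \<in> act_set W V"
      using a \<open>y \<in> V\<close> W unfolding act_set_def nbhd_id_def by blast+
    \<comment> \<open>since \<open>id \<in> W\<close>, both \<open>y\<close> and \<open>a y\<close> lie in one \<open>E'\<close>-ball,
      and \<open>E'\<close> is a symmetric half of \<open>E\<close>\<close>
    ultimately have "(z, a y) \<in> E'" "(z, y) \<in> E'" by auto
    thus ?thesis using tr unfolding E'_def by auto
  qed
  thus ?thesis using W by blast
qed

lemma nbhd_id_contains_Onb:
  fixes G :: "('a::uniform_space \<Rightarrow> 'a) set"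
  assumes W: "nbhd_id G W"
  shows "\<exists>F0 E. finite F0 \<and> entourage E \<and> (\<forall>F. F0 \<subseteq> F \<longrightarrow> Onb G F E \<subseteq> W)"
proof -
  obtain V where V: "openin (ptop G) V" "id \<in> V" "V \<subseteq> W"
    using W unfolding nbhd_id_def by blast
  obtain T where T: "openin (product_topology (\<lambda>_. euclidean) UNIV) T" "V = T \<inter> G"
    using V(1) unfolding ptop_def openin_subtopology by blast
  have "id \<in> T" using V T by blast
  then obtain U where U: "finite {i. U i \<noteq> UNIV}" "\<forall>i. open (U i)"
     "id \<in> Pi\<^sub>E UNIV U" "Pi\<^sub>E UNIV U \<subseteq> T"
    using T(1) unfolding openin_product_topology_alt by auto
  define F0 where "F0 = {i. U i \<noteq> UNIV}"
  have "\<forall>x\<in>F0. eventually (\<lambda>p. fst p = x \<longrightarrow> snd p \<in> U x) uniformity"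
  proof
    fix x
    have "x \<in> U x" using U(3) by auto
    hence "eventually (\<lambda>(x', y). x' = x \<longrightarrow> y \<in> U x) uniformity"
      using U(2) open_uniformity by blast
    thus "eventually (\<lambda>p. fst p = x \<longrightarrow> snd p \<in> U x) uniformity"
      by (simp add: split_beta')
  qed
  hence ev: "eventually (\<lambda>p. \<forall>x\<in>F0. fst p = x \<longrightarrow> snd p \<in> U x) uniformity"
    using U(1) F0_def by (intro eventually_ball_finite) auto
  define E where "E = {p. \<forall>x\<in>F0. fst p = x \<longrightarrow> snd p \<in> U x}"
  have "entourage E" unfolding entourage_def E_def using ev by simp
  moreover have "Onb G F E \<subseteq> W" if "F0 \<subseteq> F" for F
  proof
    fix a assume "a \<in> Onb G F E"
    hence aG: "a \<in> G" and ax: "\<forall>x\<in>F. (x, a x) \<in> E" unfolding Onb_def by auto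
    have "a i \<in> U i" for i
      using ax that unfolding E_def F0_def by (cases "i \<in> F0") auto
    hence "a \<in> Pi\<^sub>E UNIV U" by auto
    thus "a \<in> W" using U(4) T(2) V(3) aG by blast
  qed
  ultimately show ?thesis using U(1) F0_def by blast
qed

lemma equiuniformity_Rcell_subset_Ucov:
  fixes G :: "('a::uniform_space \<Rightarrow> 'a) set"
  assumes "homeo_group G" "equiuniformity G" "entourage E"
  shows "\<exists>W. nbhd_id G W \<and>
           (\<forall>g\<in>G. {a \<circ> g \<circ> s | a s. a \<in> W \<and> s \<in> St G F} \<subseteq> Ucov G F g E)"
proof -
  obtain W where W: "nbhd_id G W" and WE: "\<forall>a\<in>W. \<forall>y. (y, a y) \<in> E"
    using equiuniformity_small_nbhd_id assms(2,3) by blast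
  have "a \<circ> g \<circ> s \<in> Ucov G F g E" if "a \<in> W" "g \<in> G" "s \<in> St G F" for a g s
  proof -
    have "a \<in> G" "s \<in> G" using that W unfolding nbhd_id_def St_def by auto
    hence "a \<circ> g \<circ> s \<in> G"
      using \<open>g \<in> G\<close> \<open>homeo_group G\<close> unfolding homeo_group_def by simp
    moreover have "\<forall>x\<in>F. (g x, a (g (s x))) \<in> E" using that WE unfolding St_def by auto
    ultimately show ?thesis unfolding Ucov_def by simp
  qed
  thus ?thesis using W by blast
qed

lemma hyp2_Ucov_subset_Rcell:
  fixes G :: "('a::uniform_space \<Rightarrow> 'a) set"
  assumes "hyp2 G" "nbhd_id G W" "finite F"
  shows "\<exists>F' D. finite F' \<and> entourage D \<and>
           (\<forall>g\<in>G. Ucov G F' g D \<subseteq> {a \<circ> g \<circ> s | a s. a \<in> W \<and> s \<in> St G F})"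
proof -
  obtain F0 E where F0: "finite F0" "entourage E" "\<forall>F'. F0 \<subseteq> F' \<longrightarrow> Onb G F' E \<subseteq> W"
    using nbhd_id_contains_Onb[OF assms(2)] by blast
  define F' where "F' = F \<union> F0"
  have "finite F'" using F'_def F0(1) assms(3) by simp
  then obtain D where D: "entourage D" and DH: "\<forall>g\<in>G. \<forall>h\<in>G. (\<forall>x\<in>F'. (g x, h x) \<in> D) \<longrightarrow>
        (\<exists>g'\<in>{g \<circ> s | s. s \<in> St G F'}. h \<in> {a \<circ> g' | a. a \<in> Onb G F' E})"
    using assms(1) F0(2) unfolding hyp2_def by blast
  have "h \<in> {a \<circ> g \<circ> s | a s. a \<in> W \<and> s \<in> St G F}" if g: "g \<in> G" and h: "h \<in> Ucov G F' g D"
    for g h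
  proof -
    obtain s a where "s \<in> St G F'" "a \<in> Onb G F' E" "h = a \<circ> (g \<circ> s)"
      using DH g h unfolding Ucov_def by blast
    moreover have "St G F' \<subseteq> St G F" "Onb G F' E \<subseteq> W"
      using F0(3) unfolding F'_def St_def by auto
    ultimately show ?thesis by (auto simp: comp_assoc)
  qed
  thus ?thesis using \<open>finite F'\<close> D by blast
qed

lemma base_R_refines_base_U:
  fixes G :: "('a::uniform_space \<Rightarrow> 'a) set"
  assumes "homeo_group G" "equiuniformity G" "b \<in> base_U G"
  shows "\<exists>b'\<in>base_R G. refines b' b"
proof -
  from \<open>b \<in> base_U G\<close> obtain F E
    where b: "b = {Ucov G F g E | g. g \<in> G}" and "finite F" "entourage E"
    unfolding base_U_def by blast
  obtain W where "nbhd_id G W"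
    and W: "\<forall>g\<in>G. {a \<circ> g \<circ> s | a s. a \<in> W \<and> s \<in> St G F} \<subseteq> Ucov G F g E"
    using equiuniformity_Rcell_subset_Ucov[OF assms(1,2) \<open>entourage E\<close>] by blast
  have "{{a \<circ> g \<circ> s | a s. a \<in> W \<and> s \<in> St G F} | g. g \<in> G} \<in> base_R G"
    unfolding base_R_def using \<open>nbhd_id G W\<close> \<open>finite F\<close> by blast
  moreover have "refines {{a \<circ> g \<circ> s | a s. a \<in> W \<and> s \<in> St G F} | g. g \<in> G} b"
    unfolding refines_def b using W by blast
  ultimately show ?thesis by blast
qed

lemma base_U_refines_base_R:
  fixes G :: "('a::uniform_space \<Rightarrow> 'a) set"
  assumes "hyp2 G" "b \<in> base_R G"
  shows "\<exists>b'\<in>base_U G. refines b' b"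
proof -
  from \<open>b \<in> base_R G\<close> obtain W F
    where b: "b = {{a \<circ> g \<circ> s | a s. a \<in> W \<and> s \<in> St G F} | g. g \<in> G}"
    and "nbhd_id G W" "finite F"
    unfolding base_R_def by blast
  obtain F' D where "finite F'" "entourage D"
    and UW: "\<forall>g\<in>G. Ucov G F' g D \<subseteq> {a \<circ> g \<circ> s | a s. a \<in> W \<and> s \<in> St G F}"
    using hyp2_Ucov_subset_Rcell[OF \<open>hyp2 G\<close> \<open>nbhd_id G W\<close> \<open>finite F\<close>] by blast
  have "{Ucov G F' g D | g. g \<in> G} \<in> base_U G"
    unfolding base_U_def using \<open>finite F'\<close> \<open>entourage D\<close> by blast
  moreover have "refines {Ucov G F' g D | g. g \<in> G} b"
    unfolding refines_def b using UW by blast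
  ultimately show ?thesis by blast
qed

theorem theorem2p1:
  fixes G :: "('a::uniform_space \<Rightarrow> 'a) set"
  assumes "homeo_group G"
    and "admissible (ptop G) G"
    and "equiuniformity G"
  shows "gen_unif G (base_U G) \<subseteq> gen_unif G (base_R G)
         \<and> (hyp2 G \<longrightarrow> gen_unif G (base_U G) = gen_unif G (base_R G))"
proof -
  \<comment> \<open>admissibility only guarantees that R_K is a uniformity; the inclusions do not need it\<close>
  have "gen_unif G (base_U G) \<subseteq> gen_unif G (base_R G)"
    by (rule gen_unif_mono_base) (rule base_R_refines_base_U[OF assms(1,3)])
  moreover have "gen_unif G (base_R G) \<subseteq> gen_unif G (base_U G)" if "hyp2 G"
    by (rule gen_unif_mono_base) (rule base_U_refines_base_R[OF that])
  ultimately show ?thesis by blast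
qed

end
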